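(* Let $Y$ be any one of the following varieties, or any secant variety $\sigma_r(Y)$, $r\ge1$, of one of them: (a) the Grassmannian $\mathbb{G}(k,n)\subset\mathbb{P}\bigwedge^k\mathbb{C}^n$ in its Plücker embedding, $1\le k<n$; (b) the tangential variety $\tau_{d,n}=\overline{\{[L^{d-1}M]\}}\subset\mathbb{P}\mathrm{Sym}^d\mathbb{C}^{n+1}$, $d,n\ge1$; (c) the Chow variety $\mathbb{X}_{d,n}=\{[L_1\cdots L_d]: L_i\in(\mathbb{C}^{n+1})^\vee\}\subset\mathbb{P}\mathrm{Sym}^d\mathbb{C}^{n+1}$; (d) the variety of reducible forms $\mathcal{R}_{\mathbf{d},n}=\{[F_1\cdots F_k]: F_i\in\mathrm{Sym}^{d_i}\mathbb{C}^{n+1}\}\subset\mathbb{P}\mathrm{Sym}^d\mathbb{C}^{n+1}$ for fixed positive integers $\mathbf{d}=(d_1,\dots,d_k)$ with $d_1+\cdots+d_k=d$. Then $\operatorname{Hrk}_Y(p)<\infty$ for every point $p$ of the ambient projective space. For example, for every $r\ge1$ every homogeneous polynomial of degree $d$ is a coefficient-wise product of finitely many polynomials of the form $\sum_{i=1}^r L_i^{d-1}M_i$ with $L_i,M_i$ linear.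
   Context: Ambient spaces use the standard coordinates: Plücker coordinates on $\mathbb{P}\bigwedge^k\mathbb{C}^n$, monomial coefficients on $\mathbb{P}\mathrm{Sym}^d\mathbb{C}^{n+1}$ (degree-$d$ forms in $x_0,\dots,x_n$). Hadamard product of points: $(p_0:\cdots:p_N)\star(q_0:\cdots:q_N)=(p_0q_0:\cdots:p_Nq_N)$, defined when not all $p_iq_i$ vanish. For a variety $X$, $\operatorname{Hrk}_X(q)=\min\{m\mid q=p_1\star\cdots\star p_m,\ p_i\in X\}$, or $\infty$ if no such decomposition exists. $\sigma_r(Y)$ denotes the Zariski closure of the union of linear spans of $r$ points of $Y$. *)

theory Defs
  imports "Jordan_Normal_Form.Determinant" "HOL-Library.Poly_Mapping" "HOL-Library.Extended_Nat"
begin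

text \<open>A vector of the ambient space C^I (I a finite index set of coordinates) is a
function 'i => complex that vanishes outside I.  A projective subvariety X of P(C^I) is
represented by its affine cone (a set of such vectors, containing 0 and closed under scaling);
points of P(C^I) are the nonzero vectors up to nonzero scalars.\<close>

definition supp_vec :: "'i set \<Rightarrow> ('i \<Rightarrow> complex) \<Rightarrow> bool" where
  "supp_vec I p \<longleftrightarrow> (\<forall>i. i \<notin> I \<longrightarrow> p i = 0)"

definition nonzero_vec :: "'i set \<Rightarrow> ('i \<Rightarrow> complex) \<Rightarrow> bool" where
  "nonzero_vec I p \<longleftrightarrow> (\<exists>i\<in>I. p i \<noteq> 0)"

inductive_set poly_fun :: "'i set \<Rightarrow> (('i \<Rightarrow> complex) \<Rightarrow> complex) set" for I where
  pf_const: "(\<lambda>x. c) \<in> poly_fun I"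
| pf_coord: "i \<in> I \<Longrightarrow> (\<lambda>x. x i) \<in> poly_fun I"
| pf_add: "f \<in> poly_fun I \<Longrightarrow> g \<in> poly_fun I \<Longrightarrow> (\<lambda>x. f x + g x) \<in> poly_fun I"
| pf_mult: "f \<in> poly_fun I \<Longrightarrow> g \<in> poly_fun I \<Longrightarrow> (\<lambda>x. f x * g x) \<in> poly_fun I"

text \<open>Zariski closure in C^I (for cones: the cone over the projective Zariski closure).\<close>
definition zar_closure :: "'i set \<Rightarrow> ('i \<Rightarrow> complex) set \<Rightarrow> ('i \<Rightarrow> complex) set" where
  "zar_closure I X = {p. supp_vec I p \<and>
      (\<forall>f\<in>poly_fun I. (\<forall>x\<in>X. f x = 0) \<longrightarrow> f p = 0)}"

text \<open>Secant variety sigma_r(Y) (as a cone): Zariski closure of the union of the linear spans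
of r points of Y, i.e. of all sums of r vectors of the cone over Y.\<close>
definition secant :: "'i set \<Rightarrow> nat \<Rightarrow> ('i \<Rightarrow> complex) set \<Rightarrow> ('i \<Rightarrow> complex) set" where
  "secant I r Y = zar_closure I {(\<lambda>i. \<Sum>j<r. v j i) | v. \<forall>j<r. v j \<in> Y}"

text \<open>Hadamard rank: q = p_1 * ... * p_m (coordinatewise, as projective points) with
p_j in X; the minimum of such m, or infinity.\<close>
definition hadamard_decomp :: "'i set \<Rightarrow> ('i \<Rightarrow> complex) set \<Rightarrow> ('i \<Rightarrow> complex) \<Rightarrow> nat \<Rightarrow> bool" where
  "hadamard_decomp I X q m \<longleftrightarrow> (\<exists>v c. c \<noteq> 0 \<and>
      (\<forall>j<m. v j \<in> X \<and> nonzero_vec I (v j)) \<and>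
      (\<forall>i\<in>I. q i = c * (\<Prod>j<m. v j i)))"

definition Hrk :: "'i set \<Rightarrow> ('i \<Rightarrow> complex) set \<Rightarrow> ('i \<Rightarrow> complex) \<Rightarrow> enat" where
  "Hrk I X q = Inf (enat ` {m. m \<ge> 1 \<and> hadamard_decomp I X q m})"

definition proj_points :: "'i set \<Rightarrow> ('i \<Rightarrow> complex) set" where
  "proj_points I = {q. supp_vec I q \<and> nonzero_vec I q}"

text \<open>Coordinates of wedge^k C^n: k-element subsets of {0..<n}.\<close>
definition ksubsets :: "nat \<Rightarrow> nat \<Rightarrow> nat set set" where
  "ksubsets k n = {S. S \<subseteq> {..<n} \<and> card S = k}"

definition pluecker :: "nat \<Rightarrow> nat \<Rightarrow> (nat \<Rightarrow> nat \<Rightarrow> complex) \<Rightarrow> nat set \<Rightarrow> complex" where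
  "pluecker k n v S = (if S \<in> ksubsets k n then
      det (mat k k (\<lambda>(i, j). v i (sorted_list_of_set S ! j))) else 0)"

definition grassmannian_cone :: "nat \<Rightarrow> nat \<Rightarrow> (nat set \<Rightarrow> complex) set" where
  "grassmannian_cone k n = {pluecker k n v | v. True}"

type_synonym mpoly = "(nat \<Rightarrow>\<^sub>0 nat) \<Rightarrow>\<^sub>0 complex"

text \<open>Exponent vectors of degree-d monomials in x_0..x_n (the coordinates of P Sym^d C^(n+1)).\<close>
definition monoms :: "nat \<Rightarrow> nat \<Rightarrow> (nat \<Rightarrow>\<^sub>0 nat) set" where
  "monoms d n = {\<alpha>. Poly_Mapping.keys \<alpha> \<subseteq> {..n} \<and> (\<Sum>i\<le>n. Poly_Mapping.lookup \<alpha> i) = d}"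

definition forms :: "nat \<Rightarrow> nat \<Rightarrow> mpoly set" where
  "forms d n = {F. Poly_Mapping.keys F \<subseteq> monoms d n}"

definition tangential_cone :: "nat \<Rightarrow> nat \<Rightarrow> ((nat \<Rightarrow>\<^sub>0 nat) \<Rightarrow> complex) set" where
  "tangential_cone d n = zar_closure (monoms d n)
     {Poly_Mapping.lookup (L ^ (d - 1) * M) | L M. L \<in> forms 1 n \<and> M \<in> forms 1 n}"

definition chow_cone :: "nat \<Rightarrow> nat \<Rightarrow> ((nat \<Rightarrow>\<^sub>0 nat) \<Rightarrow> complex) set" where
  "chow_cone d n = {Poly_Mapping.lookup (\<Prod>i<d. L i) | L. \<forall>i<d. L i \<in> forms 1 n}"

definition reducible_cone :: "nat list \<Rightarrow> nat \<Rightarrow> ((nat \<Rightarrow>\<^sub>0 nat) \<Rightarrow> complex) set" where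
  "reducible_cone ds n = {Poly_Mapping.lookup (\<Prod>i<length ds. F i) | F. \<forall>i<length ds. F i \<in> forms (ds ! i) n}"

end

theory Submission
  imports Defs "HOL-Computational_Algebra.Fundamental_Theorem_Algebra" "HOL-Library.Nat_Bijection"
begin

(* Suppose the cone over Y contains an affine line t |-> a t + b with all a_i nonzero and
   pairwise distinct roots r_i = - b_i / a_i.  Then every point q is a Hadamard product of |I|
   points of this line: if z_1, ..., z_N (N = |I|) are the roots of the monic polynomial G of
   degree N with G(r_i) = q_i / (- a_i)^N, then prod_j (a_i z_j + b_i) = (- a_i)^N G(r_i) = q_i.
   As sigma_r(Y) contains Y, the same line serves all secant varieties.

   Such lines exist.  In the Grassmannian, take the row space of the vectors
   (x_j^i)_j for i < k - 1 and (t x_j^(k-1) + x_j^k)_j, with x_j = 2^j: its Pluecker coordinate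
   at S is the Vandermonde minor V_S times t + sum_{j in S} 2^j.  Among forms of degree e + 1,
   take (x_0 + ... + x_n)^e (sum_i (t + (e+2)^i) x_i), a point of the tangential, Chow and
   reducible varieties; its coefficient at x^alpha is e!/alpha! ((e+1) t + sum_i alpha_i (e+2)^i). *)

section \<open>Hadamard rank along a line\<close>

lemma zar_closure_superset: "x \<in> X \<Longrightarrow> supp_vec I x \<Longrightarrow> x \<in> zar_closure I X"
  unfolding zar_closure_def by auto

lemma cone_subset_secant:
  assumes "(\<lambda>_. 0) \<in> Y" "y \<in> Y" "supp_vec I y" "1 \<le> r"
  shows "y \<in> secant I r Y"
proof -
  define v where "v j = (\<lambda>i. if j = 0 then y i else 0)" for j :: nat
  have "(\<lambda>i. \<Sum>j<r. v j i) = y"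
    using \<open>1 \<le> r\<close> by (simp add: v_def sum.delta)
  moreover have "v j \<in> Y" for j using assms(1,2) by (cases "j = 0") (simp_all add: v_def)
  ultimately show ?thesis
    unfolding secant_def by (intro zar_closure_superset[OF _ assms(3)]) blast
qed

lemma Hrk_less_infinityI:
  assumes "1 \<le> m" "hadamard_decomp I X q m"
  shows "Hrk I X q < \<infinity>"
proof -
  have "Hrk I X q \<le> enat m" unfolding Hrk_def using assms by (auto intro!: Inf_lower)
  also have "\<dots> < \<infinity>" by simp
  finally show ?thesis .
qed

lemma prod_linear_factors_monic:
  fixes z :: "'i \<Rightarrow> 'a::idom"
  shows "degree (\<Prod>j\<in>A. [:- z j, 1:]) = card A" "lead_coeff (\<Prod>j\<in>A. [:- z j, 1:]) = 1"
proof -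
  show "degree (\<Prod>j\<in>A. [:- z j, 1:]) = card A"
    by (cases "finite A") (simp_all add: degree_prod_eq_sum_degree)
  show "lead_coeff (\<Prod>j\<in>A. [:- z j, 1:]) = 1"
    by (simp only: lead_coeff_prod) simp
qed

lemma interpolation_poly:
  fixes r :: "'i \<Rightarrow> 'a::field"
  assumes "finite I" "inj_on r I"
  shows "\<exists>P. degree P \<le> card I - 1 \<and> (\<forall>i\<in>I. poly P (r i) = c i)"
  using assms
proof (induction I rule: finite_induct)
  case empty
  show ?case by (intro exI[of _ 0]) simp
next
  case (insert x I)
  then obtain P where P: "degree P \<le> card I - 1" "\<forall>i\<in>I. poly P (r i) = c i" by auto
  define W where "W = (\<Prod>i\<in>I. [:- r i, 1:])"
  have W_root: "poly W (r i) = 0" if "i \<in> I" for i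
    unfolding W_def poly_prod using that insert.hyps(1) by (intro prod_zero bexI[of _ i]) auto
  have "r x \<noteq> r i" if "i \<in> I" for i
    using insert.hyps(2) insert.prems that unfolding inj_on_def by blast
  then have W_x: "poly W (r x) \<noteq> 0" unfolding W_def poly_prod using insert.hyps(1) by simp
  have "degree W \<le> card I"
    unfolding W_def by (rule order.trans[OF degree_prod_sum_le]) (auto simp: insert.hyps)
  define P' where "P' = P + smult ((c x - poly P (r x)) / poly W (r x)) W"
  have "degree P' \<le> card I"
    unfolding P'_def using P(1) \<open>degree W \<le> card I\<close>
    by (intro degree_add_le) (auto intro: order.trans[OF degree_smult_le])
  moreover have "\<forall>i\<in>insert x I. poly P' (r i) = c i"
    using P(2) W_root W_x by (auto simp: P'_def)
  ultimately show ?case using insert.hyps by (intro exI[of _ P']) simp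
qed

text \<open>The monic polynomial of degree |I| interpolating the values c splits
  over an algebraically closed field.\<close>
lemma ex_roots_prod_eq:
  fixes r c :: "'i \<Rightarrow> 'a::alg_closed_field"
  assumes "finite I" "inj_on r I"
  shows "\<exists>z. \<forall>i\<in>I. (\<Prod>j<card I. r i - z j) = c i"
proof (cases "I = {}")
  case False
  define N where "N = card I"
  have "N \<ge> 1" using False assms(1) by (simp add: N_def Suc_le_eq card_gt_0_iff)
  obtain P where P: "degree P \<le> N - 1" "\<And>i. i \<in> I \<Longrightarrow> poly P (r i) = c i"
    using interpolation_poly[OF assms] unfolding N_def by blast
  define W where "W = (\<Prod>i\<in>I. [:- r i, 1:])"
  have "degree W = N" "lead_coeff W = 1"
    unfolding W_def N_def by (rule prod_linear_factors_monic)+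
  have W_root: "poly W (r i) = 0" if "i \<in> I" for i
    unfolding W_def poly_prod using that assms(1) by (intro prod_zero bexI[of _ i]) auto
  define G where "G = W + P"
  have "degree P < degree W" using P(1) \<open>degree W = N\<close> \<open>N \<ge> 1\<close> by linarith
  then have "degree G = N" "lead_coeff G = 1"
    using \<open>degree W = N\<close> \<open>lead_coeff W = 1\<close> by (simp_all add: G_def degree_add_eq_left coeff_eq_0)
  then obtain A where A: "size A = N" "G = (\<Prod>x\<in>#A. [:-x, 1:])"
    using alg_closed_imp_factorization[of G] by fastforce
  obtain xs where xs: "mset xs = A" using ex_mset by blast
  have "length xs = N" using A(1) xs by auto
  have "poly G w = (\<Prod>j<N. w - xs ! j)" for w
  proof -
    have "poly G w = (\<Prod>x\<in>#mset xs. w - x)"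
      unfolding A(2) xs by (simp add: poly_prod_mset)
    also have "\<dots> = prod_list (map (\<lambda>x. w - x) xs)"
      by (metis mset_map prod_mset_prod_list)
    also have "\<dots> = (\<Prod>j<N. w - xs ! j)"
      by (simp add: prod.list_conv_set_nth atLeast0LessThan \<open>length xs = N\<close>)
    finally show ?thesis .
  qed
  then have "\<forall>i\<in>I. (\<Prod>j<N. r i - xs ! j) = c i"
    using P(2) W_root by (metis G_def add_0 poly_add)
  then show ?thesis unfolding N_def by blast
qed simp

lemma Hrk_finite_if_line:
  fixes a b :: "'i \<Rightarrow> complex" and y :: "complex \<Rightarrow> 'i \<Rightarrow> complex"
  assumes "finite I" and line_in: "\<And>t. y t \<in> Y"
    and line: "\<And>t i. i \<in> I \<Longrightarrow> y t i = a i * t + b i"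
    and a_nonzero: "\<And>i. i \<in> I \<Longrightarrow> a i \<noteq> 0" and inj: "inj_on (\<lambda>i. b i / a i) I"
    and q: "q \<in> proj_points I"
  shows "Hrk I Y q < \<infinity>"
proof -
  define N where "N = card I"
  obtain i0 where i0: "i0 \<in> I" "q i0 \<noteq> 0"
    using q by (auto simp: proj_points_def nonzero_vec_def)
  have "N \<ge> 1" using i0 \<open>finite I\<close> by (simp add: N_def Suc_le_eq card_gt_0_iff) blast
  have "inj_on (\<lambda>i. - b i / a i) I"
    using inj unfolding inj_on_def by (metis minus_divide_left neg_equal_iff_equal)
  then obtain z where z: "\<And>i. i \<in> I \<Longrightarrow> (\<Prod>j<N. - b i / a i - z j) = q i / (- a i) ^ N"
    using ex_roots_prod_eq[OF \<open>finite I\<close>, of _ "\<lambda>i. q i / (- a i) ^ N"] unfolding N_def by blast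
  define v where "v j = y (z j)" for j
  have prod_v: "(\<Prod>j<N. v j i) = q i" if "i \<in> I" for i
  proof -
    have "(\<Prod>j<N. v j i) = (\<Prod>j<N. - a i * (- b i / a i - z j))"
      using a_nonzero[OF that] by (intro prod.cong) (simp_all add: v_def line[OF that] field_simps)
    also have "\<dots> = (- a i) ^ N * (\<Prod>j<N. - b i / a i - z j)"
      by (simp only: prod.distrib prod_constant card_lessThan)
    finally show ?thesis using z[OF that] a_nonzero[OF that] by simp
  qed
  have "nonzero_vec I (v j)" if "j < N" for j
  proof -
    have "v j i0 \<noteq> 0" using prod_v[OF i0(1)] i0(2) that by (metis lessThan_iff prod_zero_iff finite_lessThan)
    then show ?thesis using i0(1) by (auto simp: nonzero_vec_def)
  qed
  then have "hadamard_decomp I Y q N"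
    unfolding hadamard_decomp_def using prod_v line_in
    by (intro exI[of _ v] exI[of _ 1]) (simp add: v_def)
  then show ?thesis using Hrk_less_infinityI \<open>N \<ge> 1\<close> by blast
qed

lemma Hrk_secant_finite_if_line:
  fixes a b :: "'i \<Rightarrow> complex" and y :: "complex \<Rightarrow> 'i \<Rightarrow> complex"
  assumes "finite I" and "(\<lambda>_. 0) \<in> Y" and "\<And>t. y t \<in> Y" and "\<And>t. supp_vec I (y t)"
    and "\<And>t i. i \<in> I \<Longrightarrow> y t i = a i * t + b i"
    and "\<And>i. i \<in> I \<Longrightarrow> a i \<noteq> 0" and "inj_on (\<lambda>i. b i / a i) I"
  shows "\<forall>q\<in>proj_points I. Hrk I Y q < \<infinity> \<and> (\<forall>r\<ge>1. Hrk I (secant I r Y) q < \<infinity>)"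
  using Hrk_finite_if_line[OF assms(1) _ assms(5-7)] cone_subset_secant[OF assms(2,3,4)] assms(3)
  by blast

lemma Hrk_finite_if_single_coordinate:
  assumes "I = {i0}" "y \<in> Y" "y i0 \<noteq> 0" "q \<in> proj_points I"
  shows "Hrk I Y q < \<infinity>"
proof -
  have "q i0 \<noteq> 0" using assms(1,4) by (auto simp: proj_points_def nonzero_vec_def)
  then have "hadamard_decomp I Y q 1"
    unfolding hadamard_decomp_def using assms(1-3)
    by (intro exI[of _ "\<lambda>_. y"] exI[of _ "q i0 / y i0"]) (auto simp: nonzero_vec_def)
  then show ?thesis by (rule Hrk_less_infinityI[rotated]) simp
qed

section \<open>Grassmannians\<close>

lemma det_linear_row:
  fixes a b :: "nat \<Rightarrow> 'a::comm_ring_1"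
  assumes r: "r < k"
  shows "det (mat k k (\<lambda>(i,j). if i = r then t * a j + b j else c i j)) =
         t * det (mat k k (\<lambda>(i,j). if i = r then a j else c i j)) +
         det (mat k k (\<lambda>(i,j). if i = r then b j else c i j))"
proof -
  let ?rows = "\<lambda>f i. if i = r then vec k f else vec k (c i)"
  have as_rows: "mat k k (\<lambda>(i,j). if i = r then f j else c i j) = mat\<^sub>r k k (?rows f)" for f
    by (rule eq_matI) auto
  have split: "vec k (\<lambda>j. t * a j + b j) = vec k (\<lambda>j. t * a j) + vec k b" by auto
  have "det (mat\<^sub>r k k (?rows (\<lambda>j. t * a j + b j)))
     = det (mat\<^sub>r k k (?rows (\<lambda>j. t * a j))) + det (mat\<^sub>r k k (?rows b))"
    using det_row_add[OF _ _ _ r, where a = "\<lambda>_. vec k (\<lambda>j. t * a j)" and b = "\<lambda>_. vec k b"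
        and c = "\<lambda>i. vec k (c i)"]
    unfolding split by auto
  also have "mat\<^sub>r k k (?rows (\<lambda>j. t * a j)) = multrow r t (mat\<^sub>r k k (?rows a))"
    by (rule eq_matI) auto
  also have "det \<dots> = t * det (mat\<^sub>r k k (?rows a))"
    by (rule det_multrow[OF r]) simp
  finally show ?thesis unfolding as_rows .
qed

lemma det_mat_eq_0_iff:
  fixes f :: "nat \<times> nat \<Rightarrow> 'a::idom"
  shows "det (mat k k f) = 0 \<longleftrightarrow> (\<exists>c. (\<exists>i<k. c i \<noteq> 0) \<and> (\<forall>j<k. (\<Sum>i<k. c i * f (i, j)) = 0))"
    (is "_ \<longleftrightarrow> (\<exists>c. ?dep c)")
proof -
  let ?M = "mat k k f"
  have dep_vec: "?dep (($) v) \<longleftrightarrow> v \<noteq> 0\<^sub>v k \<and> transpose_mat ?M *\<^sub>v v = 0\<^sub>v k"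
    if "v \<in> carrier_vec k" for v
    using that by (auto simp: vec_eq_iff scalar_prod_def atLeast0LessThan mult.commute)
  have dep_restrict: "?dep c \<longleftrightarrow> ?dep (($) (vec k c))" for c
  proof -
    have "(\<Sum>i<k. vec k c $ i * g i) = (\<Sum>i<k. c i * g i)" for g :: "nat \<Rightarrow> 'a"
      by (rule sum.cong) auto
    then show ?thesis by auto
  qed
  have "det ?M = 0 \<longleftrightarrow> det (transpose_mat ?M) = 0"
    using det_transpose[of ?M k] by simp
  also have "\<dots> \<longleftrightarrow> (\<exists>v. v \<in> carrier_vec k \<and> v \<noteq> 0\<^sub>v k \<and> transpose_mat ?M *\<^sub>v v = 0\<^sub>v k)"
    by (rule det_0_iff_vec_prod_zero) simp
  also have "\<dots> \<longleftrightarrow> (\<exists>c. ?dep c)"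
  proof
    assume "\<exists>v. v \<in> carrier_vec k \<and> v \<noteq> 0\<^sub>v k \<and> transpose_mat ?M *\<^sub>v v = 0\<^sub>v k"
    then show "\<exists>c. ?dep c" using dep_vec by blast
  next
    assume "\<exists>c. ?dep c"
    then obtain c where "?dep (($) (vec k c))" using dep_restrict by blast
    then show "\<exists>v. v \<in> carrier_vec k \<and> v \<noteq> 0\<^sub>v k \<and> transpose_mat ?M *\<^sub>v v = 0\<^sub>v k"
      using dep_vec[of "vec k c"] vec_carrier by blast
  qed
  finally show ?thesis .
qed

lemma det_vandermonde_nonzero:
  fixes z :: "nat \<Rightarrow> 'a::idom"
  assumes inj: "inj_on z {..<k}"
  shows "det (mat k k (\<lambda>(i,j). z j ^ i)) \<noteq> 0"
proof
  assume "det (mat k k (\<lambda>(i,j). z j ^ i)) = 0"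
  then obtain c where c: "\<exists>i<k. c i \<noteq> 0" "\<And>j. j < k \<Longrightarrow> (\<Sum>i<k. c i * z j ^ i) = 0"
    unfolding det_mat_eq_0_iff by auto
  define P where "P = (\<Sum>i<k. monom (c i) i)"
  have "k > 0" using c(1) by auto
  have "degree P < k"
    unfolding P_def using \<open>k > 0\<close> by (intro degree_sum_less) (auto intro: le_less_trans[OF degree_monom_le])
  moreover have "poly P x = poly 0 x" if "x \<in> z ` {..<k}" for x
    using that c(2) by (auto simp: P_def poly_sum poly_monom)
  moreover have "card (z ` {..<k}) = k" using card_image[OF inj] by simp
  ultimately have "P = 0" using \<open>k > 0\<close> by (intro poly_eqI_degree[of "z ` {..<k}"]) auto
  moreover have "coeff P i = c i" if "i < k" for i
    using that by (simp add: P_def coeff_sum coeff_monom)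
  ultimately show False using c(1) by auto
qed

lemma coeff_prod_linear_factors_subleading:
  fixes z :: "nat \<Rightarrow> 'a::idom"
  shows "coeff (\<Prod>j<Suc m. [:- z j, 1:]) m = - (\<Sum>j<Suc m. z j)"
proof (induction m)
  case (Suc m)
  let ?h = "\<Prod>j<Suc m. [:- z j, 1:]"
  have "coeff ?h (Suc m) = 1"
    using prod_linear_factors_monic[of z "{..<Suc m}"] by (simp del: prod.lessThan_Suc)
  moreover have "?h * [:- z (Suc m), 1:] = smult (- z (Suc m)) ?h + pCons 0 ?h"
    by (simp add: mult_pCons_right)
  ultimately show ?case using Suc.IH by simp
qed simp

lemma det_vandermonde_last_row_shifted:
  fixes z :: "nat \<Rightarrow> 'a::idom" and m :: nat
  defines "k \<equiv> Suc m"
  shows "det (mat k k (\<lambda>(i,j). if i = m then z j ^ k else z j ^ i))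
    = (\<Sum>j<k. z j) * det (mat k k (\<lambda>(i,j). z j ^ i))"
proof -
  let ?s = "\<Sum>j<k. z j"
  let ?M = "\<lambda>t. mat k k (\<lambda>(i,j). if i = m then t * z j ^ m + z j ^ k else z j ^ i)"
  have det_M: "det (?M t) = t * det (mat k k (\<lambda>(i,j). z j ^ i))
      + det (mat k k (\<lambda>(i,j). if i = m then z j ^ k else z j ^ i))" for t
  proof -
    have "(\<lambda>(i,j). if i = m then z j ^ m else z j ^ i) = (\<lambda>(i, j). z j ^ i)"
      by (auto simp: fun_eq_iff)
    then show ?thesis using det_linear_row[of m k t] by (simp add: k_def)
  qed
  define h where "h = (\<Prod>j<k. [:- z j, 1:])"
  have "degree h = k" "coeff h k = 1"
    using prod_linear_factors_monic[of z "{..<k}"] by (simp_all add: h_def)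
  moreover have "coeff h m = - ?s"
    unfolding h_def k_def by (rule coeff_prod_linear_factors_subleading)
  ultimately have poly_h: "poly h x = (\<Sum>i<m. coeff h i * x ^ i) + (- ?s * x ^ m + x ^ k)" for x
    by (simp add: poly_altdef k_def lessThan_Suc_atMost[symmetric])
  \<comment> \<open>the coefficients of h are a linear relation among the rows of M(-s)\<close>
  define c where "c i = (if i = m then 1 else coeff h i)" for i
  have "(\<Sum>i<k. c i * (if i = m then - ?s * z j ^ m + z j ^ k else z j ^ i)) = poly h (z j)" for j
    by (simp add: poly_h c_def k_def)
  also have "poly h (z j) = 0" if "j < k" for j
    unfolding h_def poly_prod using that by (intro prod_zero bexI[of _ j]) auto
  finally have "det (?M (- ?s)) = 0"
    unfolding det_mat_eq_0_iff by (intro exI[of _ c]) (auto simp: c_def k_def)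
  then show ?thesis using det_M[of "- ?s"] by (simp add: algebra_simps)
qed

definition grassmannian_line :: "nat \<Rightarrow> complex \<Rightarrow> nat \<Rightarrow> nat \<Rightarrow> complex" where
  "grassmannian_line k t i j =
    (if i = k - 1 then t * (2 ^ j) ^ (k - 1) + (2 ^ j) ^ k else (2 ^ j) ^ i)"

definition vandermonde_minor :: "nat \<Rightarrow> nat set \<Rightarrow> complex" where
  "vandermonde_minor k S = det (mat k k (\<lambda>(i,j). (2 ^ (sorted_list_of_set S ! j)) ^ i))"

lemma vandermonde_minor_nonzero:
  assumes "S \<in> ksubsets k n"
  shows "vandermonde_minor k S \<noteq> 0"
proof -
  let ?s = "sorted_list_of_set S"
  have "length ?s = k" using assms by (simp add: ksubsets_def)
  have "inj (\<lambda>j::nat. (2::complex) ^ j)"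
  proof (rule injI)
    fix a b :: nat assume "(2::complex) ^ a = 2 ^ b"
    then have "of_nat (2 ^ a) = (of_nat (2 ^ b) :: complex)" by simp
    then show "a = b" by (simp only: of_nat_eq_iff) simp
  qed
  then have "inj_on (\<lambda>l. (2::complex) ^ (?s ! l)) {..<k}"
    using \<open>length ?s = k\<close> by (auto intro!: inj_onI dest: injD simp: nth_eq_iff_index_eq)
  then show ?thesis
    unfolding vandermonde_minor_def by (rule det_vandermonde_nonzero)
qed

lemma pluecker_grassmannian_line:
  assumes "1 \<le> k" "S \<in> ksubsets k n"
  shows "pluecker k n (grassmannian_line k t) S = vandermonde_minor k S * (t + of_nat (set_encode S))"
proof -
  obtain m where k: "k = Suc m" using assms(1) by (cases k) auto
  let ?s = "sorted_list_of_set S"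
  let ?z = "\<lambda>l. (2::complex) ^ (?s ! l)"
  have "finite S" "length ?s = k" using assms(2) by (auto simp: ksubsets_def finite_subset)
  have "(\<Sum>l<k. ?z l) = (\<Sum>j\<in>S. 2 ^ j)"
    using sum.distinct_set_conv_list[of ?s "\<lambda>j. (2::complex) ^ j"] \<open>finite S\<close> \<open>length ?s = k\<close>
    by (simp add: sum.list_conv_set_nth atLeast0LessThan)
  also have "\<dots> = of_nat (set_encode S)" by (simp add: set_encode_def)
  finally have sum_z: "(\<Sum>l<k. ?z l) = of_nat (set_encode S)" .
  have "(\<lambda>(i,j). grassmannian_line k t i (?s ! j))
      = (\<lambda>(i,j). if i = m then t * ?z j ^ m + ?z j ^ k else ?z j ^ i)"
    by (auto simp: fun_eq_iff grassmannian_line_def k)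
  moreover have "(\<lambda>(i,j). if i = m then ?z j ^ m else ?z j ^ i) = (\<lambda>(i,j). ?z j ^ i)"
    by (auto simp: fun_eq_iff)
  ultimately have "pluecker k n (grassmannian_line k t) S
      = t * vandermonde_minor k S + det (mat k k (\<lambda>(i,j). if i = m then ?z j ^ k else ?z j ^ i))"
    using assms(2) det_linear_row[of m k t] by (simp add: pluecker_def vandermonde_minor_def k)
  also have "det (mat k k (\<lambda>(i,j). if i = m then ?z j ^ k else ?z j ^ i))
      = of_nat (set_encode S) * vandermonde_minor k S"
    using det_vandermonde_last_row_shifted[where z = ?z and m = m] sum_z
    unfolding vandermonde_minor_def k by simp
  finally show ?thesis by (simp add: algebra_simps)
qed

lemma zero_in_grassmannian_cone:
  assumes "1 \<le> k"
  shows "(\<lambda>_. 0) \<in> grassmannian_cone k n"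
proof -
  have "mat k k (\<lambda>(i, j). 0) = (0\<^sub>m k k :: complex mat)" by (rule eq_matI) auto
  then have "pluecker k n (\<lambda>_ _. 0) = (\<lambda>_. 0)"
    using assms by (auto simp: fun_eq_iff pluecker_def)
  then show ?thesis unfolding grassmannian_cone_def by (intro CollectI exI[of _ "\<lambda>_ _. 0"]) simp
qed

lemma Hrk_grassmannian_finite:
  assumes "1 \<le> k"
  shows "\<forall>q\<in>proj_points (ksubsets k n).
          Hrk (ksubsets k n) (grassmannian_cone k n) q < \<infinity> \<and>
          (\<forall>r\<ge>1. Hrk (ksubsets k n) (secant (ksubsets k n) r (grassmannian_cone k n)) q < \<infinity>)"
proof (rule Hrk_secant_finite_if_line[where y = "\<lambda>t. pluecker k n (grassmannian_line k t)"
      and a = "vandermonde_minor k" and b = "\<lambda>S. vandermonde_minor k S * of_nat (set_encode S)"])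
  show "finite (ksubsets k n)"
    unfolding ksubsets_def by (rule finite_subset[of _ "Pow {..<n}"]) auto
  show "(\<lambda>_. 0) \<in> grassmannian_cone k n" using assms by (rule zero_in_grassmannian_cone)
  show "pluecker k n (grassmannian_line k t) \<in> grassmannian_cone k n" for t
    unfolding grassmannian_cone_def by blast
  show "supp_vec (ksubsets k n) (pluecker k n (grassmannian_line k t))" for t
    by (simp add: supp_vec_def pluecker_def)
  show "pluecker k n (grassmannian_line k t) S
      = vandermonde_minor k S * t + vandermonde_minor k S * of_nat (set_encode S)"
    if "S \<in> ksubsets k n" for t S
    using pluecker_grassmannian_line[OF assms that] by (simp add: algebra_simps)
  show "vandermonde_minor k S \<noteq> 0" if "S \<in> ksubsets k n" for S
    using that by (rule vandermonde_minor_nonzero)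
  have "finite S" if "S \<in> ksubsets k n" for S
    using that by (auto simp: ksubsets_def finite_subset)
  then show "inj_on (\<lambda>S. vandermonde_minor k S * of_nat (set_encode S) / vandermonde_minor k S) (ksubsets k n)"
    using vandermonde_minor_nonzero by (auto intro!: inj_onI simp: set_encode_eq)
qed

section \<open>Varieties of forms\<close>

lemma lookup_mult_single_var:
  fixes p :: "(nat \<Rightarrow>\<^sub>0 nat) \<Rightarrow>\<^sub>0 'a::comm_semiring_1"
  shows "Poly_Mapping.lookup (p * Poly_Mapping.single (Poly_Mapping.single i 1) c) \<alpha> =
    (if 1 \<le> Poly_Mapping.lookup \<alpha> i
     then Poly_Mapping.lookup p (\<alpha> - Poly_Mapping.single i 1) * c else 0)"
proof -
  let ?x = "Poly_Mapping.single i (1::nat)"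
  have shift: "\<alpha> = \<beta> + ?x \<longleftrightarrow> 1 \<le> Poly_Mapping.lookup \<alpha> i \<and> \<beta> = \<alpha> - ?x" for \<beta>
    by (auto simp: poly_mapping_eq_iff fun_eq_iff lookup_add lookup_minus lookup_single when_def)
  have inner: "(\<Sum>q. (c when ?x = q) when \<alpha> = \<beta> + q) = (c when \<alpha> = \<beta> + ?x)" for \<beta>
  proof -
    have "(\<lambda>q. (c when ?x = q) when \<alpha> = \<beta> + q) = (\<lambda>q. (c when \<alpha> = \<beta> + ?x) when ?x = q)"
      by (auto simp: when_def fun_eq_iff)
    then show ?thesis by (simp only: Sum_any_when_equal')
  qed
  have "Poly_Mapping.lookup (p * Poly_Mapping.single ?x c) \<alpha>
      = (\<Sum>\<beta>. Poly_Mapping.lookup p \<beta> * (c when \<alpha> = \<beta> + ?x))"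
    by (simp only: lookup_mult lookup_single inner)
  also have "\<dots> = (\<Sum>\<beta>. (Poly_Mapping.lookup p \<beta> * c when 1 \<le> Poly_Mapping.lookup \<alpha> i) when \<beta> = \<alpha> - ?x)"
    unfolding shift by (intro Sum_any.cong) (auto simp: when_def)
  finally show ?thesis by (simp add: when_def)
qed

lemma monoms_lookup_le: "\<alpha> \<in> monoms d n \<Longrightarrow> Poly_Mapping.lookup \<alpha> i \<le> d"
proof (cases "i \<le> n")
  case True
  assume "\<alpha> \<in> monoms d n"
  then show ?thesis
    using member_le_sum[of i "{..n}" "Poly_Mapping.lookup \<alpha>"] True by (simp add: monoms_def)
next
  case False
  assume "\<alpha> \<in> monoms d n"
  then have "i \<notin> Poly_Mapping.keys \<alpha>" using False by (auto simp: monoms_def)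
  then show ?thesis by (simp add: in_keys_iff)
qed

lemma monoms_eqI:
  assumes "\<alpha> \<in> monoms d n" "\<beta> \<in> monoms d' n"
    and "\<And>i. i \<le> n \<Longrightarrow> Poly_Mapping.lookup \<alpha> i = Poly_Mapping.lookup \<beta> i"
  shows "\<alpha> = \<beta>"
proof (rule poly_mapping_eqI)
  fix i
  show "Poly_Mapping.lookup \<alpha> i = Poly_Mapping.lookup \<beta> i"
  proof (cases "i \<le> n")
    case False
    then have "i \<notin> Poly_Mapping.keys \<alpha>" "i \<notin> Poly_Mapping.keys \<beta>"
      using assms(1,2) by (auto simp: monoms_def)
    then show ?thesis by (simp add: in_keys_iff)
  qed (rule assms(3))
qed

lemma monoms_0: "monoms 0 n = {0}"
proof -
  have "\<alpha> = 0" if "\<alpha> \<in> monoms 0 n" for \<alpha>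
    using monoms_lookup_le[OF that] by (intro monoms_eqI[OF that, of 0 0]) (auto simp: monoms_def)
  then show ?thesis by (auto simp: monoms_def)
qed

lemma finite_monoms: "finite (monoms d n)"
proof -
  let ?f = "\<lambda>\<alpha>. restrict (Poly_Mapping.lookup \<alpha>) {..n}"
  have "inj_on ?f (monoms d n)"
    by (rule inj_onI, rule monoms_eqI) (auto, metis atMost_iff restrict_apply')
  moreover have "?f ` monoms d n \<subseteq> PiE {..n} (\<lambda>_. {..d})"
    by (intro image_subsetI) (simp add: restrict_PiE_iff monoms_lookup_le)
  moreover have "finite (PiE {..n} (\<lambda>_. {..d::nat}))" by (rule finite_PiE) auto
  ultimately show ?thesis by (meson finite_imageD finite_subset)
qed

lemma monoms_add: "\<alpha> \<in> monoms a n \<Longrightarrow> \<beta> \<in> monoms b n \<Longrightarrow> \<alpha> + \<beta> \<in> monoms (a + b) n"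
  unfolding monoms_def using keys_add[of \<alpha> \<beta>] by (auto simp: lookup_add sum.distrib)

lemma monoms_diff_single:
  assumes "\<alpha> \<in> monoms (Suc e) n" "1 \<le> Poly_Mapping.lookup \<alpha> i"
  shows "\<alpha> - Poly_Mapping.single i 1 \<in> monoms e n"
proof -
  let ?\<beta> = "\<alpha> - Poly_Mapping.single i 1"
  have "i \<in> Poly_Mapping.keys \<alpha>" using assms(2) by (simp add: in_keys_iff)
  then have "i \<le> n" using assms(1) by (auto simp: monoms_def)
  have decomp: "?\<beta> + Poly_Mapping.single i 1 = \<alpha>"
    using assms(2) by (intro poly_mapping_eqI) (auto simp: lookup_add lookup_minus lookup_single when_def)
  have "(\<Sum>j\<le>n. Poly_Mapping.lookup (\<beta> + Poly_Mapping.single i 1) j)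
      = (\<Sum>j\<le>n. Poly_Mapping.lookup \<beta> j) + 1" for \<beta>
    using \<open>i \<le> n\<close> by (simp add: lookup_add sum.distrib lookup_single when_def)
  from this[of ?\<beta>] have "(\<Sum>j\<le>n. Poly_Mapping.lookup ?\<beta> j) + 1 = Suc e"
    using assms(1) unfolding decomp monoms_def by simp
  moreover have "Poly_Mapping.keys ?\<beta> \<subseteq> Poly_Mapping.keys \<alpha>"
    by (auto simp: in_keys_iff lookup_minus)
  ultimately show ?thesis using assms(1) by (auto simp: monoms_def)
qed

definition monom_fact :: "(nat \<Rightarrow>\<^sub>0 nat) \<Rightarrow> nat \<Rightarrow> nat" where
  "monom_fact \<alpha> n = (\<Prod>j\<le>n. fact (Poly_Mapping.lookup \<alpha> j))"

lemma monom_fact_pos: "monom_fact \<alpha> n > 0"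
  by (simp add: monom_fact_def)

lemma monom_fact_diff_single:
  assumes "i \<le> n" "1 \<le> Poly_Mapping.lookup \<alpha> i"
  shows "monom_fact (\<alpha> - Poly_Mapping.single i 1) n * Poly_Mapping.lookup \<alpha> i = monom_fact \<alpha> n"
proof -
  let ?\<beta> = "\<alpha> - Poly_Mapping.single i 1"
  have i: "i \<in> {..n}" using assms(1) by simp
  have rest: "(\<Prod>j\<in>{..n} - {i}. fact (Poly_Mapping.lookup ?\<beta> j))
      = (\<Prod>j\<in>{..n} - {i}. fact (Poly_Mapping.lookup \<alpha> j) :: nat)"
    by (intro prod.cong) (auto simp: lookup_minus lookup_single)
  obtain m where m: "Poly_Mapping.lookup \<alpha> i = Suc m" using assms(2) by (cases "Poly_Mapping.lookup \<alpha> i") auto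
  then have "Poly_Mapping.lookup ?\<beta> i = m" by (simp add: lookup_minus)
  then show ?thesis
    unfolding monom_fact_def prod.remove[OF finite_atMost i] rest by (simp add: m algebra_simps)
qed

lemma forms_0: "0 \<in> forms d n"
  by (simp add: forms_def)

lemma forms_mult: "p \<in> forms a n \<Longrightarrow> q \<in> forms b n \<Longrightarrow> p * q \<in> forms (a + b) n"
  unfolding forms_def using keys_mult[of p q] monoms_add by blast

lemma forms_power: "p \<in> forms 1 n \<Longrightarrow> p ^ e \<in> forms e n"
proof (induction e)
  case 0
  show ?case by (auto simp: forms_def monoms_def)
next
  case (Suc e)
  then show ?case using forms_mult[of p 1 n "p ^ e" e] by simp
qed

lemma supp_vec_lookup_forms: "p \<in> forms d n \<Longrightarrow> supp_vec (monoms d n) (Poly_Mapping.lookup p)"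
  unfolding supp_vec_def forms_def by (auto simp: in_keys_iff)

definition linear_form :: "nat \<Rightarrow> (nat \<Rightarrow> complex) \<Rightarrow> mpoly" where
  "linear_form n w = (\<Sum>i\<le>n. Poly_Mapping.single (Poly_Mapping.single i 1) (w i))"

lemma linear_form_in_forms: "linear_form n w \<in> forms 1 n"
proof -
  have "Poly_Mapping.single i 1 \<in> monoms 1 n" if "i \<le> n" for i
    using that by (simp add: monoms_def lookup_single when_def)
  moreover have "Poly_Mapping.keys (linear_form n w)
      \<subseteq> (\<Union>i\<in>{..n}. Poly_Mapping.keys (Poly_Mapping.single (Poly_Mapping.single i 1) (w i)))"
    unfolding linear_form_def by (rule keys_sum)
  ultimately show ?thesis by (auto simp: forms_def)
qed

lemma lookup_mult_linear_form_multinomial: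
  assumes p: "\<And>\<beta>. \<beta> \<in> monoms e n \<Longrightarrow> Poly_Mapping.lookup p \<beta> = fact e / of_nat (monom_fact \<beta> n)"
    and \<alpha>: "\<alpha> \<in> monoms (Suc e) n"
  shows "Poly_Mapping.lookup (p * linear_form n w) \<alpha>
    = fact e / of_nat (monom_fact \<alpha> n) * (\<Sum>i\<le>n. of_nat (Poly_Mapping.lookup \<alpha> i) * w i)"
proof -
  have "Poly_Mapping.lookup (p * Poly_Mapping.single (Poly_Mapping.single i 1) (w i)) \<alpha>
      = fact e / of_nat (monom_fact \<alpha> n) * (of_nat (Poly_Mapping.lookup \<alpha> i) * w i)"
    if "i \<le> n" for i
  proof (cases "1 \<le> Poly_Mapping.lookup \<alpha> i")
    case True
    let ?\<beta> = "\<alpha> - Poly_Mapping.single i 1"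
    have "(of_nat (Poly_Mapping.lookup \<alpha> i) :: complex) \<noteq> 0" using True by simp
    have "Poly_Mapping.lookup (p * Poly_Mapping.single (Poly_Mapping.single i 1) (w i)) \<alpha>
        = fact e / of_nat (monom_fact ?\<beta> n) * w i"
      unfolding lookup_mult_single_var using True p[OF monoms_diff_single[OF \<alpha> True]] by simp
    also have "\<dots> = fact e / (of_nat (monom_fact ?\<beta> n) * of_nat (Poly_Mapping.lookup \<alpha> i))
        * (of_nat (Poly_Mapping.lookup \<alpha> i) * w i)"
      using \<open>of_nat (Poly_Mapping.lookup \<alpha> i) \<noteq> 0\<close> by simp
    also have "of_nat (monom_fact ?\<beta> n) * of_nat (Poly_Mapping.lookup \<alpha> i) = (of_nat (monom_fact \<alpha> n) :: complex)"
      using monom_fact_diff_single[OF that True] by (metis of_nat_mult)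
    finally show ?thesis .
  qed (unfold lookup_mult_single_var, simp)
  then show ?thesis
    by (simp add: linear_form_def sum_distrib_left lookup_sum)
qed

abbreviation sum_vars :: "nat \<Rightarrow> mpoly" where
  "sum_vars n \<equiv> linear_form n (\<lambda>_. 1)"

lemma lookup_sum_vars_power:
  "\<alpha> \<in> monoms e n \<Longrightarrow> Poly_Mapping.lookup (sum_vars n ^ e) \<alpha> = fact e / of_nat (monom_fact \<alpha> n)"
proof (induction e arbitrary: \<alpha>)
  case 0
  then show ?case by (simp add: monoms_0 monom_fact_def lookup_one)
next
  case (Suc e)
  have "(\<Sum>i\<le>n. of_nat (Poly_Mapping.lookup \<alpha> i)) = (of_nat (Suc e) :: complex)"
    using Suc.prems unfolding monoms_def by (simp flip: of_nat_sum)
  then show ?case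
    using lookup_mult_linear_form_multinomial[OF Suc.IH Suc.prems, of "\<lambda>_. 1"]
    by (simp add: power_Suc2 algebra_simps)
qed

lemma digits_sum_less:
  fixes f :: "nat \<Rightarrow> nat"
  assumes "\<forall>i<n. f i < b"
  shows "(\<Sum>i<n. f i * b ^ i) < b ^ n"
  using assms
proof (induction n)
  case (Suc n)
  have "(\<Sum>i<Suc n. f i * b ^ i) < b ^ n + f n * b ^ n" using Suc by simp
  also have "\<dots> = (f n + 1) * b ^ n" by simp
  also have "\<dots> \<le> b * b ^ n" using Suc.prems by (intro mult_le_mono1) (simp add: Suc_le_eq)
  finally show ?case by simp
qed simp

lemma digits_sum_inj:
  fixes f g :: "nat \<Rightarrow> nat"
  assumes "\<forall>i<n. f i < b" "\<forall>i<n. g i < b"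
    and "(\<Sum>i<n. f i * b ^ i) = (\<Sum>i<n. g i * b ^ i)"
  shows "\<forall>i<n. f i = g i"
  using assms
proof (induction n)
  case (Suc n)
  let ?F = "\<Sum>i<n. f i * b ^ i" and ?G = "\<Sum>i<n. g i * b ^ i"
  have "?F < b ^ n" "?G < b ^ n" using Suc.prems(1,2) by (simp_all add: digits_sum_less)
  moreover have eq: "?F + f n * b ^ n = ?G + g n * b ^ n" using Suc.prems(3) by simp
  ultimately have "b ^ n > 0" by linarith
  have "(?F + f n * b ^ n) mod b ^ n = ?F" "(?G + g n * b ^ n) mod b ^ n = ?G"
    using \<open>?F < b ^ n\<close> \<open>?G < b ^ n\<close> by simp_all
  moreover have "(?F + f n * b ^ n) div b ^ n = f n" "(?G + g n * b ^ n) div b ^ n = g n"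
    using \<open>?F < b ^ n\<close> \<open>?G < b ^ n\<close> \<open>b ^ n > 0\<close> by simp_all
  ultimately have "?F = ?G" "f n = g n" using eq by metis+
  moreover have "\<forall>i<n. f i = g i" using Suc.IH Suc.prems(1,2) \<open>?F = ?G\<close> by simp
  ultimately show ?case using less_Suc_eq by auto
qed simp

text \<open>Every exponent of a monomial of degree e + 1 is a digit in base e + 2, so the weights
  (e + 2)^i separate the monomials.\<close>
definition form_line :: "nat \<Rightarrow> nat \<Rightarrow> complex \<Rightarrow> mpoly" where
  "form_line e n t = sum_vars n ^ e * linear_form n (\<lambda>i. t + of_nat ((e + 2) ^ i))"

definition monom_digits :: "nat \<Rightarrow> nat \<Rightarrow> (nat \<Rightarrow>\<^sub>0 nat) \<Rightarrow> nat" where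
  "monom_digits e n \<alpha> = (\<Sum>i\<le>n. Poly_Mapping.lookup \<alpha> i * (e + 2) ^ i)"

lemma form_line_in_forms: "form_line e n t \<in> forms (Suc e) n"
  using forms_mult[OF forms_power linear_form_in_forms] linear_form_in_forms
  by (simp add: form_line_def)

lemma lookup_form_line:
  assumes "\<alpha> \<in> monoms (Suc e) n"
  shows "Poly_Mapping.lookup (form_line e n t) \<alpha>
    = fact e / of_nat (monom_fact \<alpha> n) * (of_nat (Suc e) * t + of_nat (monom_digits e n \<alpha>))"
proof -
  have "(\<Sum>i\<le>n. of_nat (Poly_Mapping.lookup \<alpha> i) * (t + of_nat ((e + 2) ^ i)))
      = (\<Sum>i\<le>n. of_nat (Poly_Mapping.lookup \<alpha> i)) * t + of_nat (monom_digits e n \<alpha>)"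
    by (simp add: monom_digits_def algebra_simps sum.distrib sum_distrib_left)
  also have "(\<Sum>i\<le>n. of_nat (Poly_Mapping.lookup \<alpha> i)) = (of_nat (Suc e) :: complex)"
    using assms unfolding monoms_def by (simp flip: of_nat_sum)
  finally show ?thesis
    unfolding form_line_def by (simp add: lookup_mult_linear_form_multinomial[OF lookup_sum_vars_power assms])
qed

lemma monom_digits_inj: "inj_on (monom_digits e n) (monoms (Suc e) n)"
proof (rule inj_onI)
  fix \<alpha> \<beta> assume \<alpha>: "\<alpha> \<in> monoms (Suc e) n" and \<beta>: "\<beta> \<in> monoms (Suc e) n"
    and "monom_digits e n \<alpha> = monom_digits e n \<beta>"
  then have "\<forall>i<Suc n. Poly_Mapping.lookup \<alpha> i = Poly_Mapping.lookup \<beta> i"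
    using monoms_lookup_le[OF \<alpha>] monoms_lookup_le[OF \<beta>]
    by (intro digits_sum_inj[where b = "e + 2"])
       (auto simp: monom_digits_def lessThan_Suc_atMost less_Suc_eq_le)
  then show "\<alpha> = \<beta>" by (intro monoms_eqI[OF \<alpha> \<beta>]) auto
qed

lemma Hrk_secant_finite_if_form_line:
  assumes "(\<lambda>_. 0) \<in> Y" "\<And>t. Poly_Mapping.lookup (form_line e n t) \<in> Y"
  shows "\<forall>q\<in>proj_points (monoms (Suc e) n). Hrk (monoms (Suc e) n) Y q < \<infinity> \<and>
      (\<forall>r\<ge>1. Hrk (monoms (Suc e) n) (secant (monoms (Suc e) n) r Y) q < \<infinity>)"
proof -
  let ?c = "\<lambda>\<alpha>. fact e / of_nat (monom_fact \<alpha> n) :: complex"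
  have c_nonzero: "?c \<alpha> \<noteq> 0" for \<alpha> using monom_fact_pos[of \<alpha> n] by simp
  have "inj_on (\<lambda>\<alpha>. of_nat (monom_digits e n \<alpha>) / (of_nat (Suc e) :: complex)) (monoms (Suc e) n)"
    using monom_digits_inj by (auto simp: inj_on_def simp del: of_nat_Suc)
  then have "inj_on (\<lambda>\<alpha>. ?c \<alpha> * of_nat (monom_digits e n \<alpha>) / (?c \<alpha> * of_nat (Suc e))) (monoms (Suc e) n)"
    using c_nonzero by (simp del: of_nat_Suc)
  then show ?thesis
    using assms c_nonzero lookup_form_line form_line_in_forms supp_vec_lookup_forms finite_monoms
    by (intro Hrk_secant_finite_if_line[where y = "\<lambda>t. Poly_Mapping.lookup (form_line e n t)"
          and a = "\<lambda>\<alpha>. ?c \<alpha> * of_nat (Suc e)" and b = "\<lambda>\<alpha>. ?c \<alpha> * of_nat (monom_digits e n \<alpha>)"])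
       (simp_all add: algebra_simps del: of_nat_Suc)
qed

lemma Hrk_tangential_finite:
  assumes "1 \<le> d"
  shows "\<forall>q\<in>proj_points (monoms d n).
          Hrk (monoms d n) (tangential_cone d n) q < \<infinity> \<and>
          (\<forall>r\<ge>1. Hrk (monoms d n) (secant (monoms d n) r (tangential_cone d n)) q < \<infinity>)"
proof -
  obtain e where d: "d = Suc e" using assms by (cases d) auto
  let ?tangents = "{Poly_Mapping.lookup (L ^ (d - 1) * M) | L M. L \<in> forms 1 n \<and> M \<in> forms 1 n}"
  have "Poly_Mapping.lookup (form_line e n t) \<in> ?tangents" for t
    unfolding form_line_def d using linear_form_in_forms by auto
  then have "Poly_Mapping.lookup (form_line e n t) \<in> tangential_cone d n" for t
    unfolding tangential_cone_def d using form_line_in_forms supp_vec_lookup_forms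
    by (intro zar_closure_superset) auto
  moreover have "(\<lambda>_. 0) \<in> ?tangents"
    using forms_0 linear_form_in_forms by (auto intro!: exI[of _ 0] simp: fun_eq_iff)
  then have "(\<lambda>_. 0) \<in> tangential_cone d n"
    unfolding tangential_cone_def by (intro zar_closure_superset) (auto simp: supp_vec_def)
  ultimately show ?thesis unfolding d by (intro Hrk_secant_finite_if_form_line)
qed

lemma form_line_in_reducible_cone:
  assumes "ds \<noteq> []" "\<forall>d\<in>set ds. 0 < d" "sum_list ds = Suc e"
  shows "Poly_Mapping.lookup (form_line e n t) \<in> reducible_cone ds n"
proof -
  obtain d0 ds' where ds: "ds = d0 # ds'" using assms(1) by (cases ds) auto
  let ?L = "sum_vars n" and ?W = "linear_form n (\<lambda>i. t + of_nat ((e + 2) ^ i))"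
  define F where "F i = (if i = 0 then ?L ^ (d0 - 1) * ?W else ?L ^ (ds ! i))" for i
  have "(\<Prod>i<length ds. F i) = ?L ^ (d0 - 1) * ?W * (\<Prod>i<length ds'. ?L ^ (ds' ! i))"
    unfolding ds length_Cons prod.lessThan_Suc_shift by (simp add: F_def ds)
  also have "\<dots> = ?L ^ (d0 - 1 + sum_list ds') * ?W"
    by (simp add: power_add power_sum sum_list_sum_nth atLeast0LessThan mult_ac)
  also have "\<dots> = form_line e n t"
    using assms(2,3) by (simp add: ds form_line_def)
  finally have "(\<Prod>i<length ds. F i) = form_line e n t" .
  moreover have "F i \<in> forms (ds ! i) n" for i
  proof (cases "i = 0")
    case True
    have "?L ^ (d0 - 1) * ?W \<in> forms (d0 - 1 + 1) n"
      by (intro forms_mult forms_power linear_form_in_forms)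
    moreover have "d0 - 1 + 1 = d0" using assms(2) by (simp add: ds)
    ultimately show ?thesis using True by (simp add: F_def ds)
  qed (simp add: F_def forms_power[OF linear_form_in_forms])
  ultimately show ?thesis unfolding reducible_cone_def by (intro CollectI exI[of _ F]) auto
qed

lemma Hrk_reducible_finite:
  assumes "ds \<noteq> []" "\<forall>d\<in>set ds. 0 < d"
  shows "\<forall>q\<in>proj_points (monoms (sum_list ds) n).
          Hrk (monoms (sum_list ds) n) (reducible_cone ds n) q < \<infinity> \<and>
          (\<forall>r\<ge>1. Hrk (monoms (sum_list ds) n)
                     (secant (monoms (sum_list ds) n) r (reducible_cone ds n)) q < \<infinity>)"
proof -
  obtain e where e: "sum_list ds = Suc e"
    using assms by (cases ds) (auto simp: gr0_conv_Suc)
  have "Poly_Mapping.lookup (\<Prod>i<length ds. (0::mpoly)) = (\<lambda>_. 0)"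
    using assms(1) by (simp add: fun_eq_iff power_0_left)
  then have "(\<lambda>_. 0) \<in> reducible_cone ds n"
    unfolding reducible_cone_def using forms_0 by (intro CollectI exI[of _ "\<lambda>_. 0"]) auto
  then show ?thesis
    unfolding e using form_line_in_reducible_cone[OF assms e] by (intro Hrk_secant_finite_if_form_line)
qed

lemma chow_cone_eq_reducible_cone: "chow_cone d n = reducible_cone (replicate d 1) n"
  by (simp add: chow_cone_def reducible_cone_def)

lemma Hrk_chow_finite:
  "\<forall>q\<in>proj_points (monoms d n).
     Hrk (monoms d n) (chow_cone d n) q < \<infinity> \<and>
     (\<forall>r\<ge>1. Hrk (monoms d n) (secant (monoms d n) r (chow_cone d n)) q < \<infinity>)"
proof (cases d)
  case 0
  \<comment> \<open>the empty product: the Chow cone is the single point 1 of a one-point space, not a cone\<close>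
  have one: "Poly_Mapping.lookup 1 \<in> chow_cone 0 n" unfolding chow_cone_def by auto
  let ?sum = "\<lambda>(r::nat) \<alpha>. \<Sum>j<r. Poly_Mapping.lookup (1::mpoly) \<alpha>"
  have "?sum r \<in> {(\<lambda>i. \<Sum>j<r. v j i) | v. \<forall>j<r. v j \<in> chow_cone 0 n}" for r
    using one by (intro CollectI exI[of _ "\<lambda>_. Poly_Mapping.lookup 1"]) simp
  then have secant: "?sum r \<in> secant (monoms 0 n) r (chow_cone 0 n)" for r
    unfolding secant_def by (rule zar_closure_superset) (simp add: supp_vec_def monoms_0 lookup_one)
  show ?thesis unfolding 0
  proof (intro ballI conjI allI impI)
    fix q assume q: "q \<in> proj_points (monoms 0 n)"
    show "Hrk (monoms 0 n) (chow_cone 0 n) q < \<infinity>"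
      by (rule Hrk_finite_if_single_coordinate[OF monoms_0 one _ q]) (simp add: lookup_one)
    fix r :: nat assume "1 \<le> r"
    then show "Hrk (monoms 0 n) (secant (monoms 0 n) r (chow_cone 0 n)) q < \<infinity>"
      by (intro Hrk_finite_if_single_coordinate[OF monoms_0 secant _ q]) (simp add: lookup_one)
  qed
next
  case (Suc e)
  then have "replicate d (1::nat) \<noteq> []" "\<forall>x\<in>set (replicate d (1::nat)). 0 < x" by auto
  moreover have "sum_list (replicate d (1::nat)) = d" by (simp add: sum_list_replicate)
  ultimately show ?thesis
    using Hrk_reducible_finite[of "replicate d 1" n] unfolding chow_cone_eq_reducible_cone by metis
qed

theorem mainTheorem9:
  shows
   "(\<forall>k n. 1 \<le> k \<and> k < n \<longrightarrow>
       (\<forall>q\<in>proj_points (ksubsets k n).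
          Hrk (ksubsets k n) (grassmannian_cone k n) q < \<infinity> \<and>
          (\<forall>r\<ge>1. Hrk (ksubsets k n) (secant (ksubsets k n) r (grassmannian_cone k n)) q < \<infinity>)))
    \<and> (\<forall>d n. 1 \<le> d \<and> 1 \<le> n \<longrightarrow>
       (\<forall>q\<in>proj_points (monoms d n).
          Hrk (monoms d n) (tangential_cone d n) q < \<infinity> \<and>
          (\<forall>r\<ge>1. Hrk (monoms d n) (secant (monoms d n) r (tangential_cone d n)) q < \<infinity>)))
    \<and> (\<forall>d n.
       (\<forall>q\<in>proj_points (monoms d n).
          Hrk (monoms d n) (chow_cone d n) q < \<infinity> \<and>
          (\<forall>r\<ge>1. Hrk (monoms d n) (secant (monoms d n) r (chow_cone d n)) q < \<infinity>)))
    \<and> (\<forall>ds n. ds \<noteq> [] \<and> (\<forall>di\<in>set ds. 0 < di) \<longrightarrow>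
       (\<forall>q\<in>proj_points (monoms (sum_list ds) n).
          Hrk (monoms (sum_list ds) n) (reducible_cone ds n) q < \<infinity> \<and>
          (\<forall>r\<ge>1. Hrk (monoms (sum_list ds) n)
                     (secant (monoms (sum_list ds) n) r (reducible_cone ds n)) q < \<infinity>)))"
  by (intro conjI allI impI; (rule Hrk_grassmannian_finite Hrk_tangential_finite Hrk_chow_finite
      Hrk_reducible_finite; blast)+)

end
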